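(* Let $c=2-\sqrt2$ and define $f:[0,c]\to\mathbb{R}$ by $$f(x)=\tfrac12\big(\ln(1-x)+\ln(1-c+x)\big)+\frac{1}{\sqrt2\,(x-1)}+\frac{2+\sqrt2-\ln(1-c)}{2}.$$ Then $f$ is a strictly decreasing bijection from $[0,c]$ onto $[0,1]$ with $f(0)=1$ and $f(c)=0$. Let $\tau=f^{-1}:[0,1]\to[0,c]$ and $h:[0,1]\to[0,1]$, $h(x)=f(c-f^{-1}(x))$ (so $h$ is decreasing with $h(0)=1$, $h(1)=0$). Then for all $x\in[0,1]$, $$\int_0^x\frac{1-\tau(y)}{1-y+h(y)}\,dy=c-\tau(x),\qquad \int_0^1\tau(y)\,dy=1-c,\qquad \int_0^1\frac{1}{1-y+h(y)}\,dy<1.$$ *)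

theory Defs
  imports "HOL-Analysis.Analysis"
begin

definition cc :: real where
  "cc = 2 - sqrt 2"

definition ff :: "real \<Rightarrow> real" where
  "ff x = (ln (1 - x) + ln (1 - cc + x)) / 2 + 1 / (sqrt 2 * (x - 1))
          + (2 + sqrt 2 - ln (1 - cc)) / 2"

definition tau :: "real \<Rightarrow> real" where
  "tau = inv_into {0..cc} ff"

definition hh :: "real \<Rightarrow> real" where
  "hh y = ff (cc - tau y)"

end

theory Submission
  imports Defs
begin

text \<open>
  On (0, c) the derivative f' x = -x(2-x) / ((1-x)^2 (1-c+x)) is negative, so f is a decreasing
  bijection and \<tau>' = 1 / f'(\<tau>). The logarithms cancel in the reflection identity
  1 - f t + f (c - t) = t(2-t) / ((1-t)(1-c+t)); with t = \<tau> y it reads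
  1 - y + h y = -(1 - \<tau> y) f'(\<tau> y). Hence the first integrand is -\<tau>', and 1 / (1 - y + h y) is
  the derivative of ln (1 - \<tau> y), so the last integral is -ln (\<surd>2 - 1) < 1. Finally,
  \<integral>\<tau> = 1 - c is integration of an inverse function, using an explicit primitive of f.
\<close>

lemma sqrt2_gt: "1.4 < sqrt (2::real)"
  by (rule real_less_rsqrt) (simp add: power2_eq_square)

lemma sqrt2_lt: "sqrt (2::real) < 2"
  using real_sqrt_less_mono[of 2 4] by simp

lemma cc_pos: "0 < cc"
  using sqrt2_lt by (simp add: cc_def)

lemma cc_less_1: "cc < 1"
  using sqrt2_gt by (simp add: cc_def)

definition ff' :: "real \<Rightarrow> real" where
  "ff' x = - x * (2 - x) / ((1 - x)^2 * (1 - cc + x))"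

lemma ff_has_derivative:
  assumes "cc - 1 < x" "x < 1"
  shows "(ff has_real_derivative ff' x) (at x)"
proof -
  define A B s where "A = 1 - x" and "B = 1 - cc + x" and "s = sqrt (2::real)"
  have pos: "A > 0" "B > 0" using assms by (auto simp: A_def B_def)
  have s: "s = A + B" "s * s = 2" by (auto simp: A_def B_def s_def cc_def)
  have "((\<lambda>x. ln (1 - x)) has_real_derivative -1/A) (at x)"
    "((\<lambda>x. ln (1 - cc + x)) has_real_derivative 1/B) (at x)"
    "((\<lambda>x. 1 / (sqrt 2 * (x - 1))) has_real_derivative - s/(2*A^2)) (at x)"
    using pos by (auto intro!: derivative_eq_intros simp: A_def B_def s_def power2_eq_square field_simps)
  then have "(ff has_real_derivative (-1/A + 1/B)/2 + - s/(2*A^2) + 0) (at x)"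
    unfolding ff_def[abs_def] by (intro DERIV_add DERIV_cdivide DERIV_const)
  also have "(-1/A + 1/B)/2 + - s/(2*A^2) + 0 = (A^2 - A*B - s*B)/(2*(A^2*B))"
    using pos by (simp add: field_simps power2_eq_square)
  also have "A^2 - A*B - s*B = 2*(A^2 - 1)"
    using s by (simp add: algebra_simps power2_eq_square)
  also have "2*(A^2 - 1)/(2*(A^2*B)) = (A^2 - 1)/(A^2*B)"
    by (rule mult_divide_mult_cancel_left) simp
  also have "A^2 - 1 = - x * (2 - x)"
    by (simp add: A_def power2_eq_square algebra_simps)
  also have "- x * (2 - x) / (A^2*B) = ff' x"
    by (simp add: ff'_def A_def B_def)
  finally show ?thesis .
qed

lemma ff'_neg: "0 < x \<Longrightarrow> x < 1 \<Longrightarrow> ff' x < 0"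
  unfolding ff'_def using cc_less_1 by (intro divide_neg_pos) auto

lemma ff_0: "ff 0 = 1"
  by (simp add: ff_def field_simps)

lemma ff_cc: "ff cc = 0"
proof -
  have "1 / (sqrt 2 * (cc - 1)) = - 1 - sqrt 2 / 2"
    using sqrt2_lt by (simp add: cc_def field_simps)
  then show ?thesis unfolding ff_def by (simp add: field_simps)
qed

lemma ff_continuous_on: "continuous_on {0..cc} ff"
proof (rule DERIV_atLeastAtMost_imp_continuous_on)
  show "\<exists>d. (ff has_real_derivative d) (at x)" if "0 \<le> x" "x \<le> cc" for x
    using that cc_pos cc_less_1 by (intro exI[of _ "ff' x"] ff_has_derivative) auto
qed

lemma ff_strict_decreasing:
  assumes "0 \<le> x" "x < y" "y \<le> cc"
  shows "ff y < ff x"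
proof (rule DERIV_neg_imp_decreasing_open[OF \<open>x < y\<close>])
  show "\<exists>d. (ff has_real_derivative d) (at z) \<and> d < 0" if "x < z" "z < y" for z
    using that assms cc_less_1 by (intro exI[of _ "ff' z"] conjI ff_has_derivative ff'_neg) auto
  show "continuous_on {x..y} ff"
    using assms by (intro continuous_on_subset[OF ff_continuous_on]) auto
qed

lemma bij_betw_Icc_if_strict_decreasing:
  fixes f :: "real \<Rightarrow> real"
  assumes "a \<le> b" and cont: "continuous_on {a..b} f"
    and decr: "\<And>x y. a \<le> x \<Longrightarrow> x < y \<Longrightarrow> y \<le> b \<Longrightarrow> f y < f x"
  shows "bij_betw f {a..b} {f b..f a}"
proof (rule bij_betw_imageI)
  have le: "f y \<le> f x" if "a \<le> x" "x \<le> y" "y \<le> b" for x y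
    using decr[of x y] that by (cases "x = y") auto
  show "inj_on f {a..b}"
    by (rule inj_onI) (metis atLeastAtMost_iff decr linorder_neqE_linordered_idom order_less_irrefl)
  show "f ` {a..b} = {f b..f a}"
  proof
    show "f ` {a..b} \<subseteq> {f b..f a}"
      using le by auto
    show "{f b..f a} \<subseteq> f ` {a..b}"
    proof
      fix y assume "y \<in> {f b..f a}"
      with IVT2'[of f b y a, OF _ _ \<open>a \<le> b\<close> cont]
      obtain x where "a \<le> x" "x \<le> b" "f x = y" by auto
      then show "y \<in> f ` {a..b}" by auto
    qed
  qed
qed

lemma ff_bij_betw: "bij_betw ff {0..cc} {0..1}"
  using bij_betw_Icc_if_strict_decreasing[OF _ ff_continuous_on ff_strict_decreasing] cc_pos
  by (simp add: ff_0 ff_cc)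

lemma tau_in: "y \<in> {0..1} \<Longrightarrow> tau y \<in> {0..cc}"
  unfolding tau_def by (metis bij_betw_imp_surj_on ff_bij_betw inv_into_into)

lemma ff_tau: "y \<in> {0..1} \<Longrightarrow> ff (tau y) = y"
  unfolding tau_def by (metis bij_betw_inv_into_right ff_bij_betw)

lemma tau_ff: "x \<in> {0..cc} \<Longrightarrow> tau (ff x) = x"
  unfolding tau_def by (metis bij_betw_inv_into_left ff_bij_betw)

lemma tau_0: "tau 0 = cc"
  using tau_ff[of cc] cc_pos by (simp add: ff_cc)

lemma tau_1: "tau 1 = 0"
  using tau_ff[of 0] cc_pos by (simp add: ff_0)

lemma tau_antimono:
  assumes "x \<in> {0..1}" "y \<in> {0..1}" "x \<le> y"
  shows "tau y \<le> tau x"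
proof (rule ccontr)
  assume "\<not> tau y \<le> tau x"
  then have "ff (tau y) < ff (tau x)"
    using tau_in assms by (intro ff_strict_decreasing) auto
  then show False
    using ff_tau assms by auto
qed

lemma tau_continuous_on: "continuous_on {0..1} tau"
  using continuous_on_inv[OF ff_continuous_on compact_Icc, of tau] tau_ff
  by (simp add: bij_betw_imp_surj_on[OF ff_bij_betw])

lemma tau_in_open: "y \<in> {0<..<1} \<Longrightarrow> tau y \<in> {0<..<cc}"
  using tau_in[of y] ff_tau[of y] ff_0 ff_cc by (cases "tau y = 0 \<or> tau y = cc") auto

lemma tau_has_derivative:
  assumes "y \<in> {0<..<1}"
  shows "(tau has_real_derivative inverse (ff' (tau y))) (at y)"
proof (rule DERIV_inverse_function[where f = ff and a = 0 and b = 1])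
  have t: "tau y \<in> {0<..<cc}"
    using tau_in_open assms by auto
  then show "(ff has_real_derivative ff' (tau y)) (at (tau y))"
    using cc_less_1 by (intro ff_has_derivative) auto
  show "ff' (tau y) \<noteq> 0"
    using ff'_neg[of "tau y"] t cc_less_1 by auto
  show "ff (tau z) = z" if "0 < z" "z < 1" for z
    using ff_tau that by auto
  show "isCont tau y"
    using continuous_on_interior[OF tau_continuous_on, of y] assms by simp
qed (use assms in auto)

lemma hh_in: "y \<in> {0..1} \<Longrightarrow> hh y \<in> {0..1}"
  using tau_in[of y] bij_betw_imp_surj_on[OF ff_bij_betw] by (auto simp: hh_def)

lemma hh_antimono:
  assumes "x \<in> {0..1}" "y \<in> {0..1}" "x \<le> y"
  shows "hh y \<le> hh x"
proof -
  have "tau y \<le> tau x" "tau x \<in> {0..cc}" "tau y \<in> {0..cc}"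
    using tau_antimono tau_in assms by auto
  then show ?thesis
    unfolding hh_def using ff_strict_decreasing[of "cc - tau x" "cc - tau y"]
    by (cases "tau x = tau y") auto
qed

lemma one_minus_ff_plus_ff_reflect:
  assumes "cc - 1 < t" "t < 1"
  shows "1 - ff t + ff (cc - t) = t * (2 - t) / ((1 - t) * (1 - cc + t))"
proof -
  define A B s where "A = 1 - t" and "B = 1 - cc + t" and "s = sqrt (2::real)"
  have pos: "A > 0" "B > 0" using assms by (auto simp: A_def B_def)
  have s: "B = s - A" "s * s = 2" by (auto simp: A_def B_def s_def cc_def)
  have "ln (1 - (cc - t)) = ln B" "ln (1 - cc + (cc - t)) = ln A"
    "s * (t - 1) = - (s * A)" "s * (cc - t - 1) = - (s * B)"
    by (simp_all add: A_def B_def algebra_simps)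
  then have "1 - ff t + ff (cc - t) = 1 + 1/(s*A) - 1/(s*B)"
    unfolding ff_def by (simp add: A_def B_def s_def)
  also have "\<dots> = (s*A*B + B - A) / (s*A*B)"
    using pos s by (simp add: field_simps)
  also have "s*A*B + B - A = s * (1 - A*A)"
    unfolding s(1) using s(2) by (simp add: algebra_simps)
  also have "s * (1 - A*A) / (s*A*B) = (1 - A*A) / (A*B)"
    using s(2) by (auto simp: s_def)
  also have "1 - A*A = t * (2 - t)"
    by (simp add: A_def algebra_simps)
  finally show ?thesis
    by (simp add: A_def B_def)
qed

lemma minus_inverse_ff':
  assumes "0 < t" "t < cc"
  shows "- inverse (ff' t) = (1 - t)^2 * (1 - cc + t) / (t * (2 - t))"
  using assms cc_less_1 by (simp add: ff'_def)

lemma reciprocal_denominator_eq: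
  assumes "y \<in> {0<..<1}"
  shows "1 / (1 - y + hh y) = - inverse (ff' (tau y)) / (1 - tau y)"
proof -
  define t where "t = tau y"
  have t: "0 < t" "t < cc"
    using tau_in_open[OF assms] by (auto simp: t_def)
  then have "1 - t \<noteq> 0"
    using cc_less_1 by auto
  have "1 - y + hh y = 1 - ff t + ff (cc - t)"
    using ff_tau assms by (simp add: hh_def t_def)
  also have "\<dots> = t * (2 - t) / ((1 - t) * (1 - cc + t))"
    using t cc_less_1 by (intro one_minus_ff_plus_ff_reflect) auto
  finally have "1 / (1 - y + hh y) = (1 - t) * (1 - cc + t) / (t * (2 - t))"
    by simp
  also have "\<dots> = - inverse (ff' t) / (1 - t)"
    using minus_inverse_ff'[OF t] \<open>1 - t \<noteq> 0\<close> by (simp add: power2_eq_square)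
  finally show ?thesis
    by (simp add: t_def)
qed

lemma quotient_eq_minus_inverse_ff':
  assumes "y \<in> {0<..<1}"
  shows "(1 - tau y) / (1 - y + hh y) = - inverse (ff' (tau y))"
proof -
  have "1 - tau y \<noteq> 0"
    using tau_in_open[OF assms] cc_less_1 by auto
  have "(1 - tau y) / (1 - y + hh y) = (1 - tau y) * (1 / (1 - y + hh y))"
    by simp
  also have "\<dots> = - inverse (ff' (tau y))"
    using reciprocal_denominator_eq[OF assms] \<open>1 - tau y \<noteq> 0\<close> by simp
  finally show ?thesis .
qed

lemma has_integral_quotient:
  assumes "x \<in> {0..1}"
  shows "((\<lambda>y. (1 - tau y) / (1 - y + hh y)) has_integral (cc - tau x)) {0..x}"
proof -
  have "((\<lambda>y. (1 - tau y) / (1 - y + hh y)) has_integral (- tau x - - tau 0)) {0..x}"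
  proof (rule fundamental_theorem_of_calculus_interior)
    show "continuous_on {0..x} (\<lambda>y. - tau y)"
      using assms by (intro continuous_on_minus continuous_on_subset[OF tau_continuous_on]) auto
    fix y assume "y \<in> {0<..<x}"
    then have y: "y \<in> {0<..<1}"
      using assms by auto
    show "((\<lambda>y. - tau y) has_vector_derivative (1 - tau y) / (1 - y + hh y)) (at y)"
      using DERIV_minus[OF tau_has_derivative[OF y]] quotient_eq_minus_inverse_ff'[OF y]
      by (simp add: has_real_derivative_iff_has_vector_derivative)
  qed (use assms in auto)
  then show ?thesis
    by (simp add: tau_0)
qed

lemma has_integral_inverse_function:
  fixes f g g' F :: "real \<Rightarrow> real"
  assumes "a \<le> b" "continuous_on {a..b} g" "continuous_on (g ` {a..b}) F"
    and g': "\<And>y. y \<in> {a<..<b} \<Longrightarrow> (g has_real_derivative g' y) (at y)"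
    and F': "\<And>y. y \<in> {a<..<b} \<Longrightarrow> (F has_real_derivative f (g y)) (at (g y))"
    and fg: "\<And>y. y \<in> {a<..<b} \<Longrightarrow> f (g y) = y"
  shows "(g has_integral (b * g b - F (g b)) - (a * g a - F (g a))) {a..b}"
proof -
  define G where "G y = y * g y - F (g y)" for y
  have "(g has_integral G b - G a) {a..b}"
  proof (rule fundamental_theorem_of_calculus_interior[OF \<open>a \<le> b\<close>])
    have "continuous_on {a..b} (\<lambda>y. F (g y))"
      using continuous_on_compose2[OF assms(3,2)] by blast
    then show "continuous_on {a..b} G"
      unfolding G_def[abs_def] using assms(2)
      by (intro continuous_on_diff continuous_on_mult continuous_on_id)
    fix y assume y: "y \<in> {a<..<b}"
    have "(G has_real_derivative 1 * g y + g' y * y - f (g y) * g' y) (at y)"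
      unfolding G_def[abs_def]
      by (intro DERIV_diff DERIV_mult DERIV_ident g'[OF y] DERIV_chain2[where f = F and g = g, OF F'[OF y]])
    moreover have "1 * g y + g' y * y - f (g y) * g' y = g y"
      using fg[OF y] by simp
    ultimately show "(G has_vector_derivative g y) (at y)"
      by (simp only: has_real_derivative_iff_has_vector_derivative)
  qed
  then show ?thesis
    by (simp add: G_def)
qed

definition ff_primitive :: "real \<Rightarrow> real" where
  "ff_primitive t = ((- (1 - t) * ln (1 - t) - t) + ((1 - cc + t) * ln (1 - cc + t) - t)) / 2
     + ln (1 - t) / sqrt 2 + (2 + sqrt 2 - ln (1 - cc)) / 2 * t"

lemma ff_primitive_has_derivative:
  assumes "cc - 1 < t" "t < 1"
  shows "(ff_primitive has_real_derivative ff t) (at t)"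
proof -
  have pos: "1 - t > 0" "1 - cc + t > 0"
    using assms by auto
  then have minus_one: "(t - 1) / (1 - t) = -1"
    by (simp add: divide_eq_eq)
  have "((\<lambda>t. - (1 - t) * ln (1 - t) - t) has_real_derivative ln (1 - t)) (at t)"
    "((\<lambda>t. (1 - cc + t) * ln (1 - cc + t) - t) has_real_derivative ln (1 - cc + t)) (at t)"
    "((\<lambda>t. (2 + sqrt 2 - ln (1 - cc)) / 2 * t) has_real_derivative (2 + sqrt 2 - ln (1 - cc)) / 2) (at t)"
    using pos minus_one by (auto intro!: derivative_eq_intros)
  moreover have "((\<lambda>t. ln (1 - t) / sqrt 2) has_real_derivative 1 / (sqrt 2 * (t - 1))) (at t)"
    using pos minus_one by (auto intro!: derivative_eq_intros simp: field_simps)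
  ultimately show ?thesis
    unfolding ff_primitive_def[abs_def] ff_def by (intro DERIV_add DERIV_cdivide)
qed

lemma ff_primitive_continuous_on: "continuous_on {0..cc} ff_primitive"
proof (rule DERIV_atLeastAtMost_imp_continuous_on)
  show "\<exists>d. (ff_primitive has_real_derivative d) (at x)" if "0 \<le> x" "x \<le> cc" for x
    using that cc_pos cc_less_1 by (intro exI[of _ "ff x"] ff_primitive_has_derivative) auto
qed

lemma ff_primitive_increment: "ff_primitive cc - ff_primitive 0 = 1 - cc"
proof -
  define L s where "L = ln (1 - cc)" and "s = sqrt (2::real)"
  have s: "s * s = 2" "cc = 2 - s"
    by (simp_all add: s_def cc_def)
  have "ff_primitive cc - ff_primitive 0 = - (1 - cc) * L - cc + L / s + (2 + s - L) / 2 * cc"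
    by (simp add: ff_primitive_def L_def s_def field_simps)
  also have "\<dots> = (1/s - s/2) * L + (s - 2) + (2 + s) * (2 - s) / 2"
    by (simp add: s(2) field_simps)
  also have "1/s - s/2 = 0"
    using s by (simp add: field_simps s_def)
  also have "(2 + s) * (2 - s) = 2"
    using s by (simp add: algebra_simps)
  finally show ?thesis
    using s by simp
qed

lemma has_integral_tau: "(tau has_integral (1 - cc)) {0..1}"
proof -
  have "(tau has_integral (1 * tau 1 - ff_primitive (tau 1)) - (0 * tau 0 - ff_primitive (tau 0))) {0..1}"
  proof (rule has_integral_inverse_function[where f = ff])
    show "continuous_on (tau ` {0..1}) ff_primitive"
      using tau_in by (intro continuous_on_subset[OF ff_primitive_continuous_on]) auto
    show "(ff_primitive has_real_derivative ff (tau y)) (at (tau y))" if "y \<in> {0<..<1}" for y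
      using tau_in_open[OF that] cc_less_1 by (intro ff_primitive_has_derivative) auto
  qed (use tau_continuous_on tau_has_derivative ff_tau in auto)
  then show ?thesis
    by (simp add: tau_0 tau_1 ff_primitive_increment)
qed

lemma has_integral_reciprocal_denominator:
  "((\<lambda>y. 1 / (1 - y + hh y)) has_integral - ln (1 - cc)) {0..1}"
proof -
  define H where "H y = ln (1 - tau y)" for y
  have "((\<lambda>y. 1 / (1 - y + hh y)) has_integral (H 1 - H 0)) {0..1}"
  proof (rule fundamental_theorem_of_calculus_interior)
    have "\<forall>y\<in>{0..1}. 1 - tau y > 0"
      using tau_in cc_less_1 by fastforce
    then show "continuous_on {0..1} H"
      unfolding H_def[abs_def] by (intro continuous_on_ln continuous_intros tau_continuous_on) auto
    fix y :: real assume y: "y \<in> {0<..<1}"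
    then have "1 - tau y > 0"
      using tau_in_open cc_less_1 by fastforce
    then have "(H has_real_derivative 1 / (1 - tau y) * (0 - inverse (ff' (tau y)))) (at y)"
      unfolding H_def[abs_def]
      by (intro DERIV_chain2[where f = ln] DERIV_ln_divide DERIV_diff DERIV_const tau_has_derivative[OF y])
    then show "(H has_vector_derivative 1 / (1 - y + hh y)) (at y)"
      using reciprocal_denominator_eq[OF y] by (simp add: has_real_derivative_iff_has_vector_derivative)
  qed simp
  then show ?thesis
    by (simp add: H_def tau_0 tau_1)
qed

lemma ln_one_minus_cc_gt: "-1 < ln (1 - cc)"
proof -
  have "1 + 1 + 1^2/2 \<le> exp (1::real)"
    using exp_lower_Taylor_quadratic[of 1] by simp
  then have "exp (-1) \<le> (0.4::real)"
    by (simp add: exp_minus field_simps)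
  also have "0.4 < 1 - cc"
    using sqrt2_gt by (simp add: cc_def)
  finally have "ln (exp (-1)) < ln (1 - cc)"
    using cc_less_1 by (subst ln_less_cancel_iff) auto
  then show ?thesis
    by simp
qed

theorem lemma3p2:
  shows "(\<forall>x\<in>{0..cc}. \<forall>y\<in>{0..cc}. x < y \<longrightarrow> ff y < ff x)
    \<and> bij_betw ff {0..cc} {0..1}
    \<and> ff 0 = 1 \<and> ff cc = 0
    \<and> (\<forall>x\<in>{0..1}. \<forall>y\<in>{0..1}. x \<le> y \<longrightarrow> hh y \<le> hh x)
    \<and> hh ` {0..1} \<subseteq> {0..1} \<and> hh 0 = 1 \<and> hh 1 = 0
    \<and> (\<forall>x\<in>{0..1::real}.
          (\<lambda>y. (1 - tau y) / (1 - y + hh y)) integrable_on {0..x}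
          \<and> integral {0..x} (\<lambda>y. (1 - tau y) / (1 - y + hh y)) = cc - tau x)
    \<and> tau integrable_on {0..1} \<and> integral {0..1} tau = 1 - cc
    \<and> (\<lambda>y. 1 / (1 - y + hh y)) integrable_on {0..1}
    \<and> integral {0..1} (\<lambda>y. 1 / (1 - y + hh y)) < 1"
proof -
  have "hh 0 = 1" "hh 1 = 0"
    by (simp_all add: hh_def tau_0 tau_1 ff_0 ff_cc)
  moreover have "integral {0..1} (\<lambda>y. 1 / (1 - y + hh y)) < 1"
    using integral_unique[OF has_integral_reciprocal_denominator] ln_one_minus_cc_gt by simp
  ultimately show ?thesis
    using ff_strict_decreasing ff_bij_betw ff_0 ff_cc hh_antimono hh_in
      has_integral_quotient has_integral_tau has_integral_reciprocal_denominator
    by (auto simp: has_integral_integrable_integral)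
qed

end
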